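(* Let $n>1$ be an integer and $\lambda>1$. Let $G=BS(1,n)=\langle a,b\mid ba=a^nb\rangle$ and let $\Phi:G\times\mathbb R^2\to\mathbb R^2$ be the linear action determined by $f_a(x)=Ax$, $f_b(x)=Bx$, where $A=\begin{pmatrix}1&0\\1&1\end{pmatrix}$ and $B=\begin{pmatrix}\lambda&0\\0&n\lambda\end{pmatrix}$ (this is well defined since $BA=A^nB$), and $\mathbb R^2$ carries the Euclidean metric. Then: (i) if $\lambda\in(1,n]$, the action $\Phi$ does not have the shadowing property; (ii) if $\lambda>n$, the action $\Phi$ has the shadowing property.
   Context: An action of a group $G$ on a metric space $(\Omega,\mathrm{dist})$ is a map $\Phi:G\times\Omega\to\Omega$ such that each $f_g=\Phi(g,\cdot)$ is a homeomorphism, $\Phi(e,x)=x$, and $\Phi(g_1g_2,x)=\Phi(g_1,\Phi(g_2,x))$. Fix a finite symmetric generating set $S$ of $G$ (e.g. $S=\{a,b,a^{-1},b^{-1}\}$; the property below does not depend on this choice). For $d>0$, a family $\{y_g\}_{g\in G}\subset\Omega$ is a $d$-pseudotrajectory if $\mathrm{dist}(y_{sg},f_s(y_g))<d$ for all $s\in S$, $g\in G$. The action has the shadowing property if for every $\varepsilon>0$ there is $d>0$ such that for every $d$-pseudotrajectory $\{y_g\}_{g\in G}$ there is $x_e\in\Omega$ with $\mathrm{dist}(y_g,f_g(x_e))<\varepsilon$ for all $g\in G$. *)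

theory Defs
  imports "HOL-Analysis.Analysis" "HOL-Algebra.Generated_Groups"
begin

text \<open>G is (a copy of) the Baumslag-Solitar group BS(1,n) = < a, b | b a = a^n b >,
  with a, b the images of the two presentation generators.  This is expressed by the
  universal property of the presentation: G is generated by a and b, the relation holds,
  and for every group H and elements x, y of H satisfying y x = x^n y there is a
  homomorphism G -> H with a |-> x, b |-> y.  Since every group generated by two elements
  is countable, it suffices to quantify over groups whose elements are natural numbers.\<close>
definition is_BS1n :: "('g, 'm) monoid_scheme \<Rightarrow> nat \<Rightarrow> 'g \<Rightarrow> 'g \<Rightarrow> bool" where
  "is_BS1n G n a b \<longleftrightarrow>
     group G \<and> a \<in> carrier G \<and> b \<in> carrier G \<and>
     carrier G = generate G {a, b} \<and>
     b \<otimes>\<^bsub>G\<^esub> a = (a [^]\<^bsub>G\<^esub> n) \<otimes>\<^bsub>G\<^esub> b \<and>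
     (\<forall>(H :: nat monoid) x y. group H \<longrightarrow> x \<in> carrier H \<longrightarrow> y \<in> carrier H \<longrightarrow>
        y \<otimes>\<^bsub>H\<^esub> x = (x [^]\<^bsub>H\<^esub> n) \<otimes>\<^bsub>H\<^esub> y \<longrightarrow>
        (\<exists>h \<in> hom G H. h a = x \<and> h b = y))"

definition group_action_on :: "('g, 'm) monoid_scheme \<Rightarrow> ('g \<Rightarrow> 'x::metric_space \<Rightarrow> 'x) \<Rightarrow> bool" where
  "group_action_on G \<Phi> \<longleftrightarrow>
     (\<forall>g \<in> carrier G. \<exists>h. homeomorphism UNIV UNIV (\<Phi> g) h) \<and>
     (\<forall>x. \<Phi> \<one>\<^bsub>G\<^esub> x = x) \<and>
     (\<forall>g1 \<in> carrier G. \<forall>g2 \<in> carrier G. \<forall>x. \<Phi> (g1 \<otimes>\<^bsub>G\<^esub> g2) x = \<Phi> g1 (\<Phi> g2 x))"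

definition pseudotrajectory ::
  "('g, 'm) monoid_scheme \<Rightarrow> 'g set \<Rightarrow> ('g \<Rightarrow> 'x::metric_space \<Rightarrow> 'x) \<Rightarrow> real \<Rightarrow> ('g \<Rightarrow> 'x) \<Rightarrow> bool" where
  "pseudotrajectory G S \<Phi> d y \<longleftrightarrow>
     (\<forall>s \<in> S. \<forall>g \<in> carrier G. dist (y (s \<otimes>\<^bsub>G\<^esub> g)) (\<Phi> s (y g)) < d)"

definition shadowing_property ::
  "('g, 'm) monoid_scheme \<Rightarrow> 'g set \<Rightarrow> ('g \<Rightarrow> 'x::metric_space \<Rightarrow> 'x) \<Rightarrow> bool" where
  "shadowing_property G S \<Phi> \<longleftrightarrow>
     (\<forall>\<epsilon>>0. \<exists>d>0. \<forall>y. pseudotrajectory G S \<Phi> d y \<longrightarrow>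
        (\<exists>x. \<forall>g \<in> carrier G. dist (y g) (\<Phi> g x) < \<epsilon>))"

definition matA :: "real^2^2" where
  "matA = vector [vector [1, 0], vector [1, 1]]"

definition matB :: "real \<Rightarrow> nat \<Rightarrow> real^2^2" where
  "matB l n = vector [vector [l, 0], vector [0, real n * l]]"

end

theory Submission
  imports Defs
begin

text \<open>Every group element acts by a matrix \<open>diag(lam\<^sup>k, (n lam)\<^sup>k) \<cdot> [[1, 0], [s, 1]]\<close>.

  For \<open>lam > n\<close>, a \<open>d\<close>-pseudotrajectory \<open>y\<close> is shadowed by \<open>x\<^sub>g = lim\<^sub>j B\<^sup>-\<^sup>j y(b\<^sup>j g)\<close>: the
  contraction of \<open>B\<^sup>-\<^sup>1\<close> makes this a geometric limit within \<open>2 d / (lam - 1)\<close> of \<open>y\<^sub>g\<close>, it is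
  \<open>b\<close>-equivariant by construction, and it is \<open>a\<close>-equivariant because \<open>b\<^sup>j a = a\<^bsup>n\<^sup>j\<^esup> b\<^sup>j\<close> and the
  error accumulated along \<open>a\<^bsup>n\<^sup>j\<^esup>\<close> is killed by \<open>B\<^sup>-\<^sup>j\<close> as \<open>(n / lam)\<^sup>j\<close>.

  For \<open>lam \<le> n\<close>, the trajectory \<open>g \<mapsto> \<eta> (lam\<^sup>k cos s, (n lam)\<^sup>k sin s)\<close> is an \<open>O(\<eta>)\<close>
  pseudotrajectory, yet along \<open>b\<^sup>j\<close> and \<open>b\<^sup>j a\<close> its first coordinates drift apart like
  \<open>\<eta> lam\<^sup>j (1 - cos 1)\<close>, which no single orbit can follow.\<close>

lemma abs_cos_add_minus_cos_le:
  fixes s t :: real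
  shows "\<bar>cos (s + t) - cos s\<bar> \<le> \<bar>t\<bar>"
proof -
  have "\<bar>cos (s + t) - cos s\<bar> = 2 * \<bar>sin ((s + t + s) / 2)\<bar> * \<bar>sin (- t / 2)\<bar>"
    by (simp add: cos_diff_cos abs_mult)
  also have "\<dots> \<le> 2 * 1 * \<bar>- t / 2\<bar>"
    by (intro mult_mono abs_sin_le_one abs_sin_x_le_abs_x) auto
  finally show ?thesis by simp
qed

lemma abs_sin_add_minus_linear_le:
  fixes s t :: real
  shows "\<bar>sin (s + t) - sin s - t * cos s\<bar> \<le> t\<^sup>2"
proof -
  let ?f = "\<lambda>z. sin (s + z) - z * cos s"
  have "norm (?f t - ?f 0) \<le> \<bar>t\<bar> * norm (t - 0)"
  proof (rule field_differentiable_bound[OF convex_closed_segment])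
    show "(?f has_field_derivative cos (s + z) - cos s) (at z within closed_segment 0 t)" for z
      by (auto intro!: derivative_eq_intros)
    show "norm (cos (s + z) - cos s) \<le> \<bar>t\<bar>" if "z \<in> closed_segment 0 t" for z
      using abs_cos_add_minus_cos_le[of s z] segment_bound1[OF that] by simp
  qed auto
  then show ?thesis by (simp add: power2_eq_square abs_mult)
qed

lemma scaled_trig_defects_le:
  fixes P Q h s t :: real
  assumes "P > 0" "Q > 0" "Q * h = P" "\<bar>t\<bar> = h" and "P * h \<le> 1 \<or> P \<le> 1 \<and> Q \<le> 1"
  shows "P * \<bar>cos (s + t) - cos s\<bar> + Q * \<bar>sin (s + t) - sin s - t * cos s\<bar> \<le> 5"
  using assms(5)
proof
  assume Ph: "P * h \<le> 1"
  have "P * \<bar>cos (s + t) - cos s\<bar> \<le> P * h"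
    using abs_cos_add_minus_cos_le[of s t] assms by (simp add: mult_left_mono)
  moreover have "Q * \<bar>sin (s + t) - sin s - t * cos s\<bar> \<le> Q * t\<^sup>2"
    using abs_sin_add_minus_linear_le[of s t] assms by (simp add: mult_left_mono)
  moreover have "Q * t\<^sup>2 = P * h"
    using assms by (metis power2_abs power2_eq_square mult.assoc)
  ultimately show ?thesis using Ph by linarith
next
  assume PQ: "P \<le> 1 \<and> Q \<le> 1"
  have "\<bar>cos (s + t) - cos s\<bar> \<le> 2"
    using abs_cos_le_one[of "s + t"] abs_cos_le_one[of s] by linarith
  then have "P * \<bar>cos (s + t) - cos s\<bar> \<le> 2"
    using PQ assms mult_mono[of P 1 "\<bar>cos (s + t) - cos s\<bar>" 2] by auto
  moreover have "\<bar>t * cos s\<bar> \<le> h"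
    using assms abs_cos_le_one[of s] by (simp add: abs_mult mult_left_le)
  then have "\<bar>sin (s + t) - sin s - t * cos s\<bar> \<le> 2 + h"
    using abs_sin_le_one[of "s + t"] abs_sin_le_one[of s] by linarith
  then have "Q * \<bar>sin (s + t) - sin s - t * cos s\<bar> \<le> Q * (2 + h)"
    using assms by (simp add: mult_left_mono)
  ultimately show ?thesis using PQ assms by (simp add: algebra_simps)
qed

lemma geometric_increments_convergent:
  fixes u :: "nat \<Rightarrow> 'a::banach"
  assumes r: "0 \<le> r" "r < 1" and incr: "\<And>i. norm (u (Suc i) - u i) \<le> C * r ^ i"
  shows "u \<longlonglongrightarrow> lim u" and "norm (lim u - u 0) \<le> C / (1 - r)"
proof -
  let ?D = "\<lambda>i. u (Suc i) - u i"
  have bound: "summable (\<lambda>i. C * r ^ i)"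
    using r by (intro summable_mult summable_geometric) auto
  have "(\<lambda>j. u 0 + (\<Sum>i<j. ?D i)) \<longlonglongrightarrow> u 0 + suminf ?D"
    by (intro tendsto_add tendsto_const summable_LIMSEQ summable_comparison_test'[OF bound incr])
  then have u: "u \<longlonglongrightarrow> u 0 + suminf ?D"
    by (simp add: sum_lessThan_telescope)
  then show "u \<longlonglongrightarrow> lim u" by (simp add: limI)
  have "norm (suminf ?D) \<le> (\<Sum>i. C * r ^ i)"
    by (rule norm_suminf_le[OF incr bound])
  then show "norm (lim u - u 0) \<le> C / (1 - r)"
    using r u by (simp add: limI suminf_mult suminf_geometric divide_simps)
qed

lemma vec2_eq_iff: "(x::real^2) = y \<longleftrightarrow> x$1 = y$1 \<and> x$2 = y$2"
  by (simp add: vec_eq_iff forall_2)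

lemma norm_vec2_le: "norm (x::real^2) \<le> \<bar>x$1\<bar> + \<bar>x$2\<bar>"
  unfolding norm_vec_def using L2_set_le_sum_abs[of "\<lambda>i. norm (x$i)" UNIV] by (simp add: sum_2)

lemma matA_mult_vec: "matA *v x = vector [x$1, x$1 + x$2]"
  unfolding matA_def by (simp add: vec_eq_iff forall_2 matrix_vector_mult_def sum_2)

lemma matB_mult_vec: "matB l n *v x = vector [l * x$1, real n * l * x$2]"
  unfolding matB_def by (simp add: vec_eq_iff forall_2 matrix_vector_mult_def sum_2)

context group
begin

lemma group_action_on_one: "group_action_on G \<Phi> \<Longrightarrow> \<Phi> \<one> x = x"
  unfolding group_action_on_def by blast

lemma group_action_on_mult:
  "group_action_on G \<Phi> \<Longrightarrow> g \<in> carrier G \<Longrightarrow> h \<in> carrier G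
    \<Longrightarrow> \<Phi> (g \<otimes> h) x = \<Phi> g (\<Phi> h x)"
  unfolding group_action_on_def by blast

lemma group_action_on_inv_cancel:
  assumes "group_action_on G \<Phi>" and "g \<in> carrier G"
  shows "\<Phi> (inv g) (\<Phi> g x) = x"
  using group_action_on_mult[OF assms(1) inv_closed[OF assms(2)] assms(2), of x] assms
  by (simp add: group_action_on_one)

lemma equivariant_on_generators_imp_orbit:
  assumes action: "group_action_on G \<Phi>" and gen: "carrier G = generate G S"
    and equi: "\<And>s g. s \<in> S \<Longrightarrow> g \<in> carrier G \<Longrightarrow> \<psi> (s \<otimes> g) = \<Phi> s (\<psi> g)"
    and g: "g \<in> carrier G"
  shows "\<psi> g = \<Phi> g (\<psi> \<one>)"
proof -
  have S: "S \<subseteq> carrier G" unfolding gen by (blast intro: generate.incl)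
  have "g \<in> generate G S" using g by (simp add: gen)
  then have "\<forall>h\<in>carrier G. \<psi> (g \<otimes> h) = \<Phi> g (\<psi> h)"
  proof (induction rule: generate.induct)
    case one
    show ?case using group_action_on_one[OF action] by simp
  next
    case (incl s)
    then show ?case using equi by blast
  next
    case (inv s)
    have sC: "s \<in> carrier G" using inv S by blast
    show ?case
    proof
      fix h assume h: "h \<in> carrier G"
      have "\<psi> h = \<psi> (s \<otimes> (inv s \<otimes> h))"
        using sC h by (simp add: m_assoc[symmetric])
      also have "\<dots> = \<Phi> s (\<psi> (inv s \<otimes> h))"
        using equi[OF inv] sC h by simp
      finally show "\<psi> (inv s \<otimes> h) = \<Phi> (inv s) (\<psi> h)"
        using group_action_on_inv_cancel[OF action sC] by metis
    qed
  next
    case (eng g1 g2)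
    then have "g1 \<in> carrier G" "g2 \<in> carrier G" by (simp_all add: gen)
    then show ?case using eng.IH by (simp add: m_assoc group_action_on_mult[OF action])
  qed
  from this[rule_format, OF one_closed] g show ?thesis by simp
qed

end

locale BS_group = group G for G :: "('g, 'm) monoid_scheme" (structure) +
  fixes n :: nat and a b :: 'g
  assumes a_closed [simp]: "a \<in> carrier G" and b_closed [simp]: "b \<in> carrier G"
    and generated: "carrier G = generate G {a, b}"
    and relation: "b \<otimes> a = a [^] n \<otimes> b"
begin

lemma b_mult_a_pow: "b \<otimes> a [^] (m::nat) = a [^] (n * m) \<otimes> b"
proof (induction m)
  case 0
  then show ?case by simp
next
  case (Suc m)
  have "b \<otimes> a [^] Suc m = (b \<otimes> a [^] m) \<otimes> a" by (simp add: m_assoc)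
  also have "\<dots> = a [^] (n * m) \<otimes> (b \<otimes> a)" using Suc by (simp add: m_assoc)
  also have "\<dots> = (a [^] (n * m) \<otimes> a [^] n) \<otimes> b" by (simp add: relation m_assoc)
  also have "\<dots> = a [^] (n * Suc m) \<otimes> b" by (simp add: nat_pow_mult add.commute)
  finally show ?case .
qed

lemma b_pow_mult_a: "b [^] (j::nat) \<otimes> a = a [^] (n ^ j) \<otimes> b [^] j"
proof (induction j)
  case 0
  then show ?case by simp
next
  case (Suc j)
  have "b [^] Suc j \<otimes> a = b \<otimes> (b [^] j \<otimes> a)"
    unfolding nat_pow_Suc2[OF b_closed] by (simp add: m_assoc)
  also have "\<dots> = (b \<otimes> a [^] (n ^ j)) \<otimes> b [^] j" using Suc by (simp add: m_assoc)
  also have "\<dots> = a [^] (n ^ Suc j) \<otimes> b [^] Suc j"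
    unfolding nat_pow_Suc2[OF b_closed] by (simp add: b_mult_a_pow m_assoc)
  finally show ?case .
qed

end

locale linear_BS_action = BS_group +
  fixes lam :: real and \<Phi> :: "'g \<Rightarrow> real^2 \<Rightarrow> real^2"
  assumes n_gt1: "n > 1" and lam_gt1: "lam > 1" and action: "group_action_on G \<Phi>"
    and Phi_a_matA: "\<Phi> a x = matA *v x" and Phi_b_matB: "\<Phi> b x = matB lam n *v x"
begin

text \<open>The matrix \<open>diag(lam\<^sup>k, (n lam)\<^sup>k) \<cdot> [[1, 0], [s, 1]]\<close>; these matrices form the image of
  the action, with \<open>a \<mapsto> (0, 1)\<close> and \<open>b \<mapsto> (1, 0)\<close>.\<close>
definition scale_shear :: "int \<Rightarrow> real \<Rightarrow> real^2 \<Rightarrow> real^2" where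
  "scale_shear k s v = vector [lam powr k * v$1, (real n * lam) powr k * (s * v$1 + v$2)]"

lemma scale_shear_comp:
  "scale_shear k s (scale_shear k' s' v) = scale_shear (k + k') (s * real n powr (- k') + s') v"
proof -
  have "lam powr k' = (real n * lam) powr k' * real n powr (- k')"
    using n_gt1 lam_gt1 by (simp add: powr_mult powr_minus_divide)
  then show ?thesis by (simp add: scale_shear_def vec2_eq_iff powr_add algebra_simps)
qed

lemma scale_shear_diff: "scale_shear k s (v - w) = scale_shear k s v - scale_shear k s w"
  by (simp add: scale_shear_def vec2_eq_iff algebra_simps)

lemma scale_shear_0: "scale_shear 0 s v = vector [v$1, s * v$1 + v$2]"
  using n_gt1 lam_gt1 by (simp add: scale_shear_def)

lemma scale_shear_0_0: "scale_shear 0 0 v = v"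
  by (simp add: scale_shear_0 vec2_eq_iff)

lemma scale_shear_neg_0:
  "scale_shear (- int j) 0 v = vector [v$1 / lam ^ j, v$2 / (real n * lam) ^ j]"
  using n_gt1 lam_gt1 by (simp add: scale_shear_def powr_minus_divide powr_realpow)

lemma Phi_a_eq: "\<Phi> a v = scale_shear 0 1 v"
  by (simp add: Phi_a_matA matA_mult_vec scale_shear_0)

lemma Phi_b_eq: "\<Phi> b v = scale_shear 1 0 v"
  using lam_gt1 by (simp add: Phi_b_matB matB_mult_vec scale_shear_def)

lemma Phi_inv_a_eq: "\<Phi> (inv a) v = scale_shear 0 (- 1) v"
proof -
  have "\<Phi> a (scale_shear 0 (- 1) v) = v"
    by (simp add: Phi_a_eq scale_shear_comp scale_shear_0 vec2_eq_iff)
  then show ?thesis using group_action_on_inv_cancel[OF action a_closed] by metis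
qed

lemma Phi_inv_b_eq: "\<Phi> (inv b) v = scale_shear (- 1) 0 v"
proof -
  have "\<Phi> b (scale_shear (- 1) 0 v) = v"
    by (simp add: Phi_b_eq scale_shear_comp scale_shear_0 vec2_eq_iff)
  then show ?thesis using group_action_on_inv_cancel[OF action b_closed] by metis
qed

lemma Phi_eq_scale_shear:
  assumes "g \<in> carrier G"
  shows "\<exists>k s. \<forall>v. \<Phi> g v = scale_shear k s v"
proof -
  have "g \<in> generate G {a, b}" using assms by (simp add: generated)
  then show ?thesis
  proof (induction rule: generate.induct)
    case one
    have "\<forall>v. \<Phi> \<one> v = scale_shear 0 0 v"
      by (simp add: group_action_on_one[OF action] scale_shear_0_0)
    then show ?case by blast
  next
    case (incl g)
    then show ?case using Phi_a_eq Phi_b_eq by blast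
  next
    case (inv g)
    then show ?case using Phi_inv_a_eq Phi_inv_b_eq by blast
  next
    case (eng g1 g2)
    then have "g1 \<in> carrier G" "g2 \<in> carrier G" by (simp_all add: generated)
    with eng.IH show ?case by (metis group_action_on_mult[OF action] scale_shear_comp)
  qed
qed

lemma Phi_b_pow_eq: "\<Phi> (b [^] (j::nat)) v = scale_shear (int j) 0 v"
proof (induction j arbitrary: v)
  case 0
  then show ?case by (simp add: group_action_on_one[OF action] scale_shear_0_0)
next
  case (Suc j)
  have "\<Phi> (b [^] Suc j) v = \<Phi> (b [^] j) (\<Phi> b v)" by (simp add: group_action_on_mult[OF action])
  then show ?case using Suc by (simp add: Phi_b_eq scale_shear_comp add.commute)
qed

lemma norm_scale_shear_neg_le:
  "norm (scale_shear (- int j) 0 v) \<le> \<bar>v$1\<bar> / lam ^ j + \<bar>v$2\<bar> / (real n * lam) ^ j"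
  using norm_vec2_le[of "scale_shear (- int j) 0 v"] lam_gt1 n_gt1
  by (simp add: scale_shear_neg_0 abs_divide)

lemma norm_scale_shear_neg_le_norm: "norm (scale_shear (- int j) 0 v) \<le> 2 * norm v / lam ^ j"
proof -
  have pos: "0 < lam ^ j" using lam_gt1 by simp
  have "lam ^ j \<le> (real n * lam) ^ j" using n_gt1 lam_gt1 by (intro power_mono) auto
  then have "\<bar>v$2\<bar> / (real n * lam) ^ j \<le> \<bar>v$2\<bar> / lam ^ j"
    using pos by (intro divide_left_mono) auto
  moreover have "\<bar>v$1\<bar> / lam ^ j \<le> norm v / lam ^ j" "\<bar>v$2\<bar> / lam ^ j \<le> norm v / lam ^ j"
    using pos by (auto intro!: divide_right_mono component_le_norm_cart)
  ultimately have "norm (scale_shear (- int j) 0 v) \<le> norm v / lam ^ j + norm v / lam ^ j"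
    using norm_scale_shear_neg_le[of j v] by linarith
  then show ?thesis by simp
qed

context
  fixes y :: "'g \<Rightarrow> real^2" and d :: real
  assumes d_pos: "d > 0"
    and pseudo_a: "\<And>g. g \<in> carrier G \<Longrightarrow> norm (y (a \<otimes> g) - \<Phi> a (y g)) < d"
    and pseudo_b: "\<And>g. g \<in> carrier G \<Longrightarrow> norm (y (b \<otimes> g) - \<Phi> b (y g)) < d"
begin

definition pullback :: "'g \<Rightarrow> nat \<Rightarrow> real^2" where
  "pullback g j = scale_shear (- int j) 0 (y (b [^] j \<otimes> g))"

definition shadow :: "'g \<Rightarrow> real^2" where
  "shadow g = lim (pullback g)"

lemma pullback_increment_le:
  assumes "g \<in> carrier G"
  shows "norm (pullback g (Suc i) - pullback g i) \<le> 2 * d / lam * (1 / lam) ^ i"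
proof -
  define h where "h = b [^] i \<otimes> g"
  have h: "h \<in> carrier G" using assms by (simp add: h_def)
  have "b [^] Suc i \<otimes> g = b \<otimes> h"
    using assms unfolding h_def nat_pow_Suc2[OF b_closed] by (simp add: m_assoc)
  then have "pullback g (Suc i) - pullback g i
      = scale_shear (- int (Suc i)) 0 (y (b \<otimes> h) - \<Phi> b (y h))"
    by (simp add: pullback_def scale_shear_diff Phi_b_eq scale_shear_comp h_def)
  then have "norm (pullback g (Suc i) - pullback g i)
      \<le> 2 * norm (y (b \<otimes> h) - \<Phi> b (y h)) / lam ^ Suc i"
    using norm_scale_shear_neg_le_norm by metis
  also have "\<dots> \<le> 2 * d / lam ^ Suc i"
    using pseudo_b[OF h] lam_gt1 by (intro divide_right_mono) auto
  also have "\<dots> = 2 * d / lam * (1 / lam) ^ i" by (simp add: power_divide)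
  finally show ?thesis .
qed

lemma pullback_LIMSEQ_shadow: "g \<in> carrier G \<Longrightarrow> pullback g \<longlonglongrightarrow> shadow g"
  unfolding shadow_def
  by (rule geometric_increments_convergent(1)[OF _ _ pullback_increment_le]) (use lam_gt1 in auto)

lemma norm_shadow_minus_le:
  assumes "g \<in> carrier G"
  shows "norm (shadow g - y g) \<le> 2 * d / (lam - 1)"
proof -
  have "norm (shadow g - pullback g 0) \<le> 2 * d / lam / (1 - 1 / lam)"
    unfolding shadow_def
    by (rule geometric_increments_convergent(2)[OF _ _ pullback_increment_le[OF assms]])
      (use lam_gt1 in auto)
  also have "\<dots> = 2 * d / (lam - 1)" using lam_gt1 by (simp add: field_simps)
  finally show ?thesis using assms by (simp add: pullback_def scale_shear_0_0)
qed

lemma shadow_b_equivariant: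
  assumes "g \<in> carrier G"
  shows "shadow (b \<otimes> g) = \<Phi> b (shadow g)"
proof -
  have "pullback (b \<otimes> g) = (\<lambda>j. \<Phi> b (pullback g (Suc j)))"
  proof
    fix j
    have "b [^] j \<otimes> (b \<otimes> g) = b [^] Suc j \<otimes> g" using assms by (simp add: m_assoc)
    then show "pullback (b \<otimes> g) j = \<Phi> b (pullback g (Suc j))"
      by (simp add: pullback_def Phi_b_eq scale_shear_comp)
  qed
  moreover have "(\<lambda>j. \<Phi> b (pullback g (Suc j))) \<longlonglongrightarrow> \<Phi> b (shadow g)"
    unfolding Phi_b_matB
    by (intro bounded_linear.tendsto[OF matrix_vector_mul_bounded_linear] LIMSEQ_Suc
        pullback_LIMSEQ_shadow assms)
  ultimately have "pullback (b \<otimes> g) \<longlonglongrightarrow> \<Phi> b (shadow g)" by simp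
  moreover have "pullback (b \<otimes> g) \<longlonglongrightarrow> shadow (b \<otimes> g)"
    using assms by (simp add: pullback_LIMSEQ_shadow)
  ultimately show ?thesis using LIMSEQ_unique by blast
qed

lemma a_pow_deviation_le:
  assumes "h \<in> carrier G"
  shows "\<bar>(y (a [^] m \<otimes> h) - scale_shear 0 (real m) (y h))$1\<bar> \<le> real m * d
    \<and> \<bar>(y (a [^] m \<otimes> h) - scale_shear 0 (real m) (y h))$2\<bar> \<le> (real m)\<^sup>2 * d"
proof (induction m)
  case 0
  then show ?case using assms by (simp add: scale_shear_0_0)
next
  case (Suc m)
  define k where "k = a [^] m \<otimes> h"
  have k: "k \<in> carrier G" using assms by (simp add: k_def)
  have ak: "a [^] Suc m \<otimes> h = a \<otimes> k"
    using assms unfolding k_def nat_pow_Suc2[OF a_closed] by (simp add: m_assoc)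
  define \<delta> where "\<delta> = y (a \<otimes> k) - \<Phi> a (y k)"
  have "norm \<delta> < d" using pseudo_a[OF k] by (simp add: \<delta>_def)
  then have \<delta>: "\<bar>\<delta>$1\<bar> < d" "\<bar>\<delta>$2\<bar> < d"
    using component_le_norm_cart[of \<delta>] by (meson le_less_trans)+
  have IH: "\<bar>y k $1 - y h $1\<bar> \<le> real m * d"
    "\<bar>y k $2 - (real m * y h $1 + y h $2)\<bar> \<le> (real m)\<^sup>2 * d"
    using Suc by (auto simp: k_def scale_shear_0)
  have "(y (a [^] Suc m \<otimes> h) - scale_shear 0 (real (Suc m)) (y h))$1
      = \<delta>$1 + (y k $1 - y h $1)"
    unfolding ak \<delta>_def by (simp add: scale_shear_0 Phi_a_eq algebra_simps)
  then have "\<bar>(y (a [^] Suc m \<otimes> h) - scale_shear 0 (real (Suc m)) (y h))$1\<bar>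
      \<le> real (Suc m) * d"
    using \<delta> IH by (simp add: algebra_simps)
  moreover have "(y (a [^] Suc m \<otimes> h) - scale_shear 0 (real (Suc m)) (y h))$2
      = \<delta>$2 + (y k $1 - y h $1) + (y k $2 - (real m * y h $1 + y h $2))"
    unfolding ak \<delta>_def by (simp add: scale_shear_0 Phi_a_eq algebra_simps)
  moreover have "d + real m * d + (real m)\<^sup>2 * d \<le> (real (Suc m))\<^sup>2 * d"
    using d_pos by (simp add: power2_eq_square algebra_simps)
  then have "\<bar>\<delta>$2 + (y k $1 - y h $1) + (y k $2 - (real m * y h $1 + y h $2))\<bar>
      \<le> (real (Suc m))\<^sup>2 * d"
    using \<delta> IH by linarith
  ultimately show ?case by simp
qed

text \<open>Since \<open>b\<^sup>j a = a\<^bsup>n\<^sup>j\<^esup> b\<^sup>j\<close>, the \<open>a\<close>-defect of the \<open>j\<close>-th pullback comes from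
  \<open>n\<^sup>j\<close> steps along \<open>a\<close>, whose errors \<open>(n\<^sup>j d, n\<^sup>2\<^sup>j d)\<close> are contracted by
  \<open>(lam\<^sup>-\<^sup>j, (n lam)\<^sup>-\<^sup>j)\<close>; this leaves \<open>2 d (n / lam)\<^sup>j\<close>, which vanishes exactly when
  \<open>lam > n\<close>.\<close>
lemma shadow_a_equivariant:
  assumes g: "g \<in> carrier G" and lam_gt_n: "lam > real n"
  shows "shadow (a \<otimes> g) = \<Phi> a (shadow g)"
proof -
  have defect: "norm (pullback (a \<otimes> g) j - \<Phi> a (pullback g j)) \<le> 2 * d * (real n / lam) ^ j"
    for j
  proof -
    define h where "h = b [^] j \<otimes> g"
    have h: "h \<in> carrier G" using g by (simp add: h_def)
    have "b [^] j \<otimes> (a \<otimes> g) = a [^] (n ^ j) \<otimes> h"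
      using g by (simp add: h_def b_pow_mult_a m_assoc[symmetric])
    moreover have "\<Phi> a (scale_shear (- int j) 0 v)
        = scale_shear (- int j) 0 (scale_shear 0 (real (n ^ j)) v)" for v
      using n_gt1 by (simp add: Phi_a_eq scale_shear_comp powr_minus powr_realpow)
    ultimately have "pullback (a \<otimes> g) j - \<Phi> a (pullback g j)
        = scale_shear (- int j) 0 (y (a [^] (n ^ j) \<otimes> h) - scale_shear 0 (real (n ^ j)) (y h))"
      by (simp add: pullback_def h_def scale_shear_diff)
    also have "norm \<dots> \<le> real (n ^ j) * d / lam ^ j + (real (n ^ j))\<^sup>2 * d / (real n * lam) ^ j"
      using a_pow_deviation_le[OF h, of "n ^ j"] lam_gt1 n_gt1
      by (intro order.trans[OF norm_scale_shear_neg_le] add_mono divide_right_mono) auto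
    also have "\<dots> = 2 * d * (real n / lam) ^ j"
      using lam_gt1 n_gt1 by (simp add: power_divide power_mult_distrib field_simps power2_eq_square)
    finally show ?thesis .
  qed
  have "(\<lambda>j. 2 * d * (real n / lam) ^ j) \<longlonglongrightarrow> 0"
    using lam_gt_n n_gt1 by (intro tendsto_mult_right_zero LIMSEQ_power_zero) auto
  then have "(\<lambda>j. pullback (a \<otimes> g) j - \<Phi> a (pullback g j)) \<longlonglongrightarrow> 0"
    by (rule Lim_null_comparison[rotated]) (use defect in simp)
  moreover have "(\<lambda>j. \<Phi> a (pullback g j)) \<longlonglongrightarrow> \<Phi> a (shadow g)"
    unfolding Phi_a_matA
    by (intro bounded_linear.tendsto[OF matrix_vector_mul_bounded_linear] pullback_LIMSEQ_shadow g)
  ultimately have "pullback (a \<otimes> g) \<longlonglongrightarrow> \<Phi> a (shadow g)"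
    using tendsto_add by fastforce
  moreover have "pullback (a \<otimes> g) \<longlonglongrightarrow> shadow (a \<otimes> g)"
    using g by (simp add: pullback_LIMSEQ_shadow)
  ultimately show ?thesis using LIMSEQ_unique by blast
qed

lemma pseudotrajectory_shadowed:
  assumes "lam > real n"
  shows "\<exists>x. \<forall>g\<in>carrier G. norm (y g - \<Phi> g x) \<le> 2 * d / (lam - 1)"
proof (intro exI ballI)
  fix g assume g: "g \<in> carrier G"
  have "shadow g = \<Phi> g (shadow \<one>)"
    using equivariant_on_generators_imp_orbit[OF action generated _ g]
      shadow_a_equivariant[OF _ assms] shadow_b_equivariant by blast
  then show "norm (y g - \<Phi> g (shadow \<one>)) \<le> 2 * d / (lam - 1)"
    using norm_shadow_minus_le[OF g] by (simp add: norm_minus_commute)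
qed

end

theorem shadowing_if_lam_gt_n:
  assumes "lam > real n"
  shows "shadowing_property G {a, b, inv a, inv b} \<Phi>"
  unfolding shadowing_property_def
proof (intro allI impI)
  fix \<epsilon> :: real assume \<epsilon>: "\<epsilon> > 0"
  define d where "d = \<epsilon> * (lam - 1) / 4"
  have d: "d > 0" using lam_gt1 \<epsilon> by (simp add: d_def)
  have "\<exists>x. \<forall>g\<in>carrier G. dist (y g) (\<Phi> g x) < \<epsilon>"
    if "pseudotrajectory G {a, b, inv a, inv b} \<Phi> d y" for y
  proof -
    have "\<And>g. g \<in> carrier G \<Longrightarrow> norm (y (a \<otimes> g) - \<Phi> a (y g)) < d"
      "\<And>g. g \<in> carrier G \<Longrightarrow> norm (y (b \<otimes> g) - \<Phi> b (y g)) < d"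
      using that unfolding pseudotrajectory_def dist_norm by auto
    then obtain x where x: "\<forall>g\<in>carrier G. norm (y g - \<Phi> g x) \<le> 2 * d / (lam - 1)"
      using pseudotrajectory_shadowed[OF d _ _ assms] by blast
    have "2 * d / (lam - 1) < \<epsilon>" using lam_gt1 \<epsilon> by (simp add: d_def field_simps)
    then show ?thesis using x by (auto simp: dist_norm intro: le_less_trans)
  qed
  with d show "\<exists>d>0. \<forall>y. pseudotrajectory G {a, b, inv a, inv b} \<Phi> d y
      \<longrightarrow> (\<exists>x. \<forall>g\<in>carrier G. dist (y g) (\<Phi> g x) < \<epsilon>)" by blast
qed

text \<open>If \<open>\<Phi> g = scale_shear k s\<close>, the quotient below recovers \<open>s\<close> and
  \<open>wave \<eta> g = (\<eta> lam\<^sup>k cos s, \<eta> (n lam)\<^sup>k sin s)\<close>.  Along \<open>a\<^sup>\<plusminus>\<^sup>1\<close> the shear parameter \<open>s\<close>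
  moves by \<open>\<plusminus>n\<^sup>-\<^sup>k\<close>, so the defect of \<open>wave \<eta>\<close> is a first-order Taylor remainder of
  \<open>cos\<close> and \<open>sin\<close>, while the first coordinate keeps oscillating with amplitude \<open>\<eta> lam\<^sup>k\<close>.\<close>
definition wave :: "real \<Rightarrow> 'g \<Rightarrow> real^2" where
  "wave \<eta> g = (let s = (\<Phi> g (vector [1, 0]))$2 / (\<Phi> g (vector [0, 1]))$2
     in \<Phi> g (vector [\<eta> * cos s, \<eta> * (sin s - s * cos s)]))"

lemma wave_eq:
  assumes "\<forall>v. \<Phi> g v = scale_shear k s v"
  shows "wave \<eta> g = vector [\<eta> * lam powr k * cos s, \<eta> * (real n * lam) powr k * sin s]"
proof -
  have "(real n * lam) powr k > 0" using n_gt1 lam_gt1 by simp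
  then have "(\<Phi> g (vector [1, 0]))$2 / (\<Phi> g (vector [0, 1]))$2 = s"
    using assms by (simp add: scale_shear_def)
  then show ?thesis
    unfolding wave_def Let_def using assms by (simp add: scale_shear_def vec2_eq_iff algebra_simps)
qed

text \<open>This is the only place where \<open>lam \<le> n\<close> is used.\<close>
lemma scale_growth_dichotomy:
  assumes "lam \<le> real n"
  shows "lam powr k * real n powr (- k) \<le> 1 \<or> lam powr k \<le> 1 \<and> (real n * lam) powr k \<le> 1"
proof (cases "k \<ge> 0")
  case True
  have "lam powr k \<le> real n powr k" using True lam_gt1 assms by (intro powr_mono2) auto
  then show ?thesis using n_gt1 by (simp add: powr_minus_divide divide_le_eq)
next
  case False
  then show ?thesis using lam_gt1 n_gt1
    by (auto intro!: less_imp_le[OF powr_less_one] less_1_mult)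
qed

lemma wave_shear_defect_le:
  assumes g: "g \<in> carrier G" and \<sigma>: "\<sigma> \<in> carrier G" "\<forall>v. \<Phi> \<sigma> v = scale_shear 0 \<epsilon> v"
    and \<epsilon>: "\<bar>\<epsilon>\<bar> = 1" and \<eta>: "\<eta> > 0" and lam_le_n: "lam \<le> real n"
  shows "norm (wave \<eta> (\<sigma> \<otimes> g) - \<Phi> \<sigma> (wave \<eta> g)) \<le> 5 * \<eta>"
proof -
  obtain k s where ks: "\<forall>v. \<Phi> g v = scale_shear k s v" using Phi_eq_scale_shear[OF g] by blast
  define P where "P = lam powr k"
  define Q where "Q = (real n * lam) powr k"
  define h where "h = real n powr (- k)"
  define t where "t = \<epsilon> * h"
  have PQ: "P > 0" "Q > 0" "Q * h = P"
    using lam_gt1 n_gt1 by (simp_all add: P_def Q_def h_def powr_mult powr_minus_divide)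
  have t: "\<bar>t\<bar> = h" using \<epsilon> by (simp add: t_def h_def abs_mult)
  have "\<forall>v. \<Phi> (\<sigma> \<otimes> g) v = scale_shear k (s + t) v"
    using \<sigma> g ks by (simp add: group_action_on_mult[OF action] scale_shear_comp t_def h_def add.commute)
  from wave_eq[OF this] wave_eq[OF ks]
  have "wave \<eta> (\<sigma> \<otimes> g) = vector [\<eta> * P * cos (s + t), \<eta> * Q * sin (s + t)]"
    and "wave \<eta> g = vector [\<eta> * P * cos s, \<eta> * Q * sin s]"
    by (simp_all add: P_def Q_def)
  then have "wave \<eta> (\<sigma> \<otimes> g) - \<Phi> \<sigma> (wave \<eta> g)
      = vector [\<eta> * (P * (cos (s + t) - cos s)), \<eta> * (Q * (sin (s + t) - sin s - t * cos s))]"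
    using \<sigma>(2) by (simp add: scale_shear_0 vec2_eq_iff t_def algebra_simps flip: PQ(3))
  also have "norm \<dots>
      \<le> \<eta> * (P * \<bar>cos (s + t) - cos s\<bar> + Q * \<bar>sin (s + t) - sin s - t * cos s\<bar>)"
    using norm_vec2_le[of "vector [\<eta> * (P * (cos (s + t) - cos s)),
        \<eta> * (Q * (sin (s + t) - sin s - t * cos s))]"] \<eta> PQ
    by (simp add: abs_mult distrib_left)
  also have "\<dots> \<le> \<eta> * 5"
    using scaled_trig_defects_le[OF PQ t] scale_growth_dichotomy[OF lam_le_n, of k] \<eta>
    unfolding P_def Q_def h_def by (intro mult_left_mono) auto
  finally show ?thesis by simp
qed

lemma wave_scale_exact:
  assumes g: "g \<in> carrier G" and \<sigma>: "\<sigma> \<in> carrier G" "\<forall>v. \<Phi> \<sigma> v = scale_shear e 0 v"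
  shows "wave \<eta> (\<sigma> \<otimes> g) = \<Phi> \<sigma> (wave \<eta> g)"
proof -
  obtain k s where ks: "\<forall>v. \<Phi> g v = scale_shear k s v" using Phi_eq_scale_shear[OF g] by blast
  have "\<forall>v. \<Phi> (\<sigma> \<otimes> g) v = scale_shear (e + k) s v"
    using \<sigma> g ks by (simp add: group_action_on_mult[OF action] scale_shear_comp)
  from wave_eq[OF this] wave_eq[OF ks] \<sigma>(2) show ?thesis
    by (simp add: scale_shear_def vec2_eq_iff powr_add)
qed

lemma wave_pseudotrajectory:
  assumes "\<eta> > 0" and "lam \<le> real n"
  shows "pseudotrajectory G {a, b, inv a, inv b} \<Phi> (6 * \<eta>) (wave \<eta>)"
  unfolding pseudotrajectory_def dist_norm
proof (intro ballI)
  fix \<sigma> g assume \<sigma>: "\<sigma> \<in> {a, b, inv a, inv b}" and g: "g \<in> carrier G"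
  have shear: "norm (wave \<eta> (\<sigma> \<otimes> g) - \<Phi> \<sigma> (wave \<eta> g)) \<le> 5 * \<eta>"
    if "\<sigma> \<in> carrier G" "\<forall>v. \<Phi> \<sigma> v = scale_shear 0 \<epsilon> v" "\<bar>\<epsilon>\<bar> = 1" for \<epsilon>
    using wave_shear_defect_le[OF g that assms] .
  have scale: "wave \<eta> (\<sigma> \<otimes> g) = \<Phi> \<sigma> (wave \<eta> g)"
    if "\<sigma> \<in> carrier G" "\<forall>v. \<Phi> \<sigma> v = scale_shear e 0 v" for e
    using wave_scale_exact[OF g that] .
  from \<sigma> have "norm (wave \<eta> (\<sigma> \<otimes> g) - \<Phi> \<sigma> (wave \<eta> g)) \<le> 5 * \<eta>"
    using shear[of 1] shear[of "- 1"] scale[of 1] scale[of "- 1"] assms(1)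
    by (auto simp: Phi_a_eq Phi_inv_a_eq Phi_b_eq Phi_inv_b_eq)
  then show "norm (wave \<eta> (\<sigma> \<otimes> g) - \<Phi> \<sigma> (wave \<eta> g)) < 6 * \<eta>" using assms(1) by linarith
qed

lemma wave_minus_orbit_first_coord:
  assumes "\<forall>v. \<Phi> g v = scale_shear (int j) s v"
  shows "(wave \<eta> g - \<Phi> g x)$1 = lam ^ j * (\<eta> * cos s - x$1)"
  using wave_eq[OF assms] assms lam_gt1
  by (simp add: scale_shear_def powr_realpow algebra_simps)

text \<open>An orbit has first coordinate \<open>lam\<^sup>j x\<^sub>1\<close> at both \<open>b\<^sup>j\<close> and \<open>b\<^sup>j a\<close>, whereas the first
  coordinates of \<open>wave \<eta>\<close> there differ by \<open>\<eta> lam\<^sup>j (1 - cos 1)\<close>.\<close>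
theorem not_shadowing_if_lam_le_n:
  assumes "lam \<le> real n"
  shows "\<not> shadowing_property G {a, b, inv a, inv b} \<Phi>"
proof
  assume "shadowing_property G {a, b, inv a, inv b} \<Phi>"
  then obtain d where "d > 0"
    and shadows: "\<And>y. pseudotrajectory G {a, b, inv a, inv b} \<Phi> d y
      \<Longrightarrow> \<exists>x. \<forall>g\<in>carrier G. dist (y g) (\<Phi> g x) < 1"
    unfolding shadowing_property_def by (meson zero_less_one)
  define \<eta> where "\<eta> = d / 6"
  have \<eta>: "\<eta> > 0" using \<open>d > 0\<close> by (simp add: \<eta>_def)
  obtain x where x: "\<forall>g\<in>carrier G. dist (wave \<eta> g) (\<Phi> g x) < 1"
    using shadows wave_pseudotrajectory[OF \<eta> assms] by (auto simp: \<eta>_def)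
  have close: "\<bar>lam ^ j * (\<eta> * cos s - x$1)\<bar> < 1"
    if "g \<in> carrier G" "\<forall>v. \<Phi> g v = scale_shear (int j) s v" for g j s
  proof -
    have "dist (wave \<eta> g) (\<Phi> g x) < 1" using x that(1) by blast
    then have "\<bar>(wave \<eta> g - \<Phi> g x)$1\<bar> < 1"
      using component_le_norm_cart[of "wave \<eta> g - \<Phi> g x" 1] by (simp add: dist_norm)
    then show ?thesis by (simp only: wave_minus_orbit_first_coord[OF that(2)])
  qed
  have "\<forall>v. \<Phi> (b [^] j) v = scale_shear (int j) 0 v" for j
    by (simp add: Phi_b_pow_eq)
  moreover have "\<forall>v. \<Phi> (b [^] j \<otimes> a) v = scale_shear (int j) 1 v" for j
    by (simp add: group_action_on_mult[OF action] Phi_b_pow_eq Phi_a_eq scale_shear_comp)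
  ultimately have "\<bar>lam ^ j * (\<eta> - x$1)\<bar> < 1" "\<bar>lam ^ j * (\<eta> * cos 1 - x$1)\<bar> < 1" for j
    using close[of "b [^] j" j 0] close[of "b [^] j \<otimes> a" j 1] by auto
  moreover have "lam ^ j * (\<eta> * (1 - cos 1))
      = lam ^ j * (\<eta> - x$1) - lam ^ j * (\<eta> * cos 1 - x$1)" for j
    by (simp add: algebra_simps)
  ultimately have bounded: "lam ^ j * (\<eta> * (1 - cos 1)) < 2" for j
    by (metis abs_less_iff add_strict_mono diff_conv_add_uminus one_add_one)
  have "cos 1 < (1::real)" using cos_monotone_0_pi[of 0 1] pi_gt3 by simp
  then have "\<eta> * (1 - cos 1) > 0" using \<eta> by simp
  moreover obtain j where "2 / (\<eta> * (1 - cos 1)) < lam ^ j"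
    using real_arch_pow[OF lam_gt1] by blast
  ultimately show False using bounded[of j] by (simp add: divide_less_eq)
qed

end

theorem theorem2:
  fixes G :: "('g, 'm) monoid_scheme" and n :: nat and lam :: real and a b :: 'g
    and \<Phi> :: "'g \<Rightarrow> real^2 \<Rightarrow> real^2"
  assumes "n > 1" and "lam > 1"
    and "is_BS1n G n a b"
    and "group_action_on G \<Phi>"
    and "\<And>x. \<Phi> a x = matA *v x"
    and "\<And>x. \<Phi> b x = matB lam n *v x"
  shows "(lam \<le> real n \<longrightarrow> \<not> shadowing_property G {a, b, inv\<^bsub>G\<^esub> a, inv\<^bsub>G\<^esub> b} \<Phi>)
       \<and> (lam > real n \<longrightarrow> shadowing_property G {a, b, inv\<^bsub>G\<^esub> a, inv\<^bsub>G\<^esub> b} \<Phi>)"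
proof -
  interpret linear_BS_action G n a b lam \<Phi>
    using assms unfolding linear_BS_action_def linear_BS_action_axioms_def BS_group_def
      BS_group_axioms_def is_BS1n_def by blast
  show ?thesis using shadowing_if_lam_gt_n not_shadowing_if_lam_le_n by blast
qed

end
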